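(* Let $\mathcal{JF}=(\mathcal F,\mathcal F_d,R)$ be a complementary justification frame and $x\in\mathcal F_d$. If $\tau$ is a positional strategy for player $F$ in $G_{\mathcal{JF}}$, then $J_\tau(x)$ (the play graph of $\tau$ in $x$ with rule symbols filtered out and every label $y$ replaced by $\sim y$) is a connected, locally complete graph-like justification in $\mathcal{JF}$ with $\sim x$ as a root. If $\tau$ is a general strategy for $F$, then $J_\tau(x)$ (obtained in the same way from the play tree of $\tau$ in $x$) is a connected, locally complete tree-like justification in $\mathcal{JF}$ with $\sim x$ as a root.
   Context: Let $\mathcal F$ be a set (fact space) containing $\mathcal L=\{\mathbf t,\mathbf f,\mathbf u\}$ with an involution $\sim$ satisfying $\sim\mathbf t=\mathbf f$, $\sim\mathbf u=\mathbf u$, $\sim x\ne x$ for $x\ne\mathbf u$; $\sim A=\{\sim a:a\in A\}$. A justification frame is $\mathcal{JF}=(\mathcal F,\mathcal F_d,R)$ where $\mathcal F_d\subseteq\mathcal F$ satisfies $\sim\mathcal F_d=\mathcal F_d$, $\mathcal F_d\cap\mathcal L=\emptyset$, and $R\subseteq\mathcal F_d\times2^{\mathcal F}$ is a set of rules $x\gets A$ with nonempty bodies such that every $x\in\mathcal F_d$ heads a rule; $\mathcal F_o=\mathcal F\setminus\mathcal F_d$. A selection function for $x\in\mathcal F_d$ assigns to every body $A$ of a rule $x\gets A$ an element $s(A)\in A$; $\mathrm{Im}(s)$ is its image. $R^*$ is the set of all rules $\sim x\gets\sim\mathrm{Im}(s)$ with $x\in\mathcal F_d$ and $s$ a selection function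 for $x$. The frame is complementary if $R^*=R$. A justification in $\mathcal{JF}$ is a directed graph $(N,E)$ with labelling $\ell:N\to\mathcal F$ such that each internal node $n$ (node with an outgoing edge) has $\ell(n)\in\mathcal F_d$ and $\ell(n)\gets\{\ell(m):(n,m)\in E\}\in R$; graph-like if $\ell$ is injective; tree-like if its underlying undirected graph is acyclic; locally complete if no leaf is labelled by a defined fact; connected if its underlying undirected graph is connected; $y$ is a root if some node labelled $y$ reaches every node. Game graph $G_{\mathcal{JF}}$: states $S_T=\mathcal F$ (owned by $T$) and $S_F=\{r_{x\gets A}:x\gets A\in R\}$ (owned by $F$), edges $(x,r_{x\gets A})$ and $(r_{x\gets A},y)$ for every rule $x\gets A$, $y\in A$. A general strategy for $P\in\{T,F\}$ maps each finite path whose last state $s\in S_P$ has an outgoing edge to an outgoing edge of $s$; a positional strategy depends only on the last state. A path $s_0s_1\cdots$ is consistent with a strategy $\rho$ of $P$ if $\rho(s_0\cdots s_i)=(s_i,s_{i+1})$ whenever $s_i\in S_P$ and $s_{i+1}$ exists. The play tree of a general strategy $\rho$ in $x$ has as nodes the finite paths from $x$ consistent with $\rho$, labelled by their last state, with edges to one-step extensions; the play graph of a positional $\rho$ in $x$ is the subgraph of $G_{\mathcal{JF}}$ of states and edges on paths from $x$ consistent with $\rho$. Filtering out rule symbols: delete rule-symbol nodes and add an edge $(n,m)$ whenever $(n,k),(k,m)$ were edges with $k$ a rule-symbol node. *)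

theory Defs
  imports Main
begin

text \<open>The fact space is the universe of the type 'f. The involution is neg,
  the logical facts are tt, ff, uu.\<close>

definition fact_space_ok :: "('f \<Rightarrow> 'f) \<Rightarrow> 'f \<Rightarrow> 'f \<Rightarrow> 'f \<Rightarrow> bool" where
  "fact_space_ok neg tt ff uu \<longleftrightarrow>
     distinct [tt, ff, uu] \<and> (\<forall>x. neg (neg x) = x) \<and>
     neg tt = ff \<and> neg uu = uu \<and> (\<forall>x. x \<noteq> uu \<longrightarrow> neg x \<noteq> x)"

definition justification_frame ::
  "('f \<Rightarrow> 'f) \<Rightarrow> 'f \<Rightarrow> 'f \<Rightarrow> 'f \<Rightarrow> 'f set \<Rightarrow> ('f \<times> 'f set) set \<Rightarrow> bool" where
  "justification_frame neg tt ff uu Fd R \<longleftrightarrow>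
     fact_space_ok neg tt ff uu \<and>
     neg ` Fd = Fd \<and> Fd \<inter> {tt, ff, uu} = {} \<and>
     (\<forall>(x, A) \<in> R. x \<in> Fd \<and> A \<noteq> {}) \<and>
     (\<forall>x \<in> Fd. \<exists>A. (x, A) \<in> R)"

definition selection_fun :: "('f \<times> 'f set) set \<Rightarrow> 'f \<Rightarrow> ('f set \<Rightarrow> 'f) \<Rightarrow> bool" where
  "selection_fun R x s \<longleftrightarrow> (\<forall>A. (x, A) \<in> R \<longrightarrow> s A \<in> A)"

definition sel_image :: "('f \<times> 'f set) set \<Rightarrow> 'f \<Rightarrow> ('f set \<Rightarrow> 'f) \<Rightarrow> 'f set" where
  "sel_image R x s = s ` {A. (x, A) \<in> R}"

definition Rstar :: "('f \<Rightarrow> 'f) \<Rightarrow> 'f set \<Rightarrow> ('f \<times> 'f set) set \<Rightarrow> ('f \<times> 'f set) set" where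
  "Rstar neg Fd R = {(neg x, neg ` sel_image R x s) | x s. x \<in> Fd \<and> selection_fun R x s}"

definition complementary :: "('f \<Rightarrow> 'f) \<Rightarrow> 'f set \<Rightarrow> ('f \<times> 'f set) set \<Rightarrow> bool" where
  "complementary neg Fd R \<longleftrightarrow> Rstar neg Fd R = R"

definition is_justification ::
  "'f set \<Rightarrow> ('f \<times> 'f set) set \<Rightarrow> 'n set \<Rightarrow> ('n \<times> 'n) set \<Rightarrow> ('n \<Rightarrow> 'f) \<Rightarrow> bool" where
  "is_justification Fd R N E lab \<longleftrightarrow>
     E \<subseteq> N \<times> N \<and>
     (\<forall>n \<in> N. (\<exists>m. (n, m) \<in> E) \<longrightarrow>
        lab n \<in> Fd \<and> (lab n, {lab m | m. (n, m) \<in> E}) \<in> R)"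

definition graph_like :: "'n set \<Rightarrow> ('n \<Rightarrow> 'f) \<Rightarrow> bool" where
  "graph_like N lab \<longleftrightarrow> inj_on lab N"

definition uadj :: "('n \<times> 'n) set \<Rightarrow> 'n \<Rightarrow> 'n \<Rightarrow> bool" where
  "uadj E n m \<longleftrightarrow> (n, m) \<in> E \<or> (m, n) \<in> E"

definition tree_like :: "'n set \<Rightarrow> ('n \<times> 'n) set \<Rightarrow> bool" where
  "tree_like N E \<longleftrightarrow>
     (\<forall>n. (n, n) \<notin> E) \<and>
     \<not> (\<exists>cs. length cs \<ge> 3 \<and> distinct cs \<and> set cs \<subseteq> N \<and>
            (\<forall>i < length cs. uadj E (cs ! i) (cs ! ((i + 1) mod length cs))))"

definition locally_complete :: "'f set \<Rightarrow> 'n set \<Rightarrow> ('n \<times> 'n) set \<Rightarrow> ('n \<Rightarrow> 'f) \<Rightarrow> bool" where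
  "locally_complete Fd N E lab \<longleftrightarrow> (\<forall>n \<in> N. (\<nexists>m. (n, m) \<in> E) \<longrightarrow> lab n \<notin> Fd)"

definition connected_just :: "'n set \<Rightarrow> ('n \<times> 'n) set \<Rightarrow> bool" where
  "connected_just N E \<longleftrightarrow> (\<forall>n \<in> N. \<forall>m \<in> N. (n, m) \<in> (E \<union> E\<inverse>)\<^sup>*)"

definition is_root :: "'n set \<Rightarrow> ('n \<times> 'n) set \<Rightarrow> ('n \<Rightarrow> 'f) \<Rightarrow> 'f \<Rightarrow> bool" where
  "is_root N E lab y \<longleftrightarrow> (\<exists>n \<in> N. lab n = y \<and> (\<forall>m \<in> N. (n, m) \<in> E\<^sup>*))"

datatype 'f gstate = FactS 'f | RuleS 'f "'f set"

fun is_fact :: "'f gstate \<Rightarrow> bool" where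
  "is_fact (FactS _) = True"
| "is_fact (RuleS _ _) = False"

fun fact_of :: "'f gstate \<Rightarrow> 'f" where
  "fact_of (FactS y) = y"
| "fact_of (RuleS x _) = x"

definition game_edges :: "('f \<times> 'f set) set \<Rightarrow> ('f gstate \<times> 'f gstate) set" where
  "game_edges R =
     {(FactS x, RuleS x A) | x A. (x, A) \<in> R} \<union>
     {(RuleS x A, FactS y) | x A y. (x, A) \<in> R \<and> y \<in> A}"

text \<open>States owned by F: rule symbols of rules in R (states owned by T: all FactS y).\<close>
definition S_F :: "('f \<times> 'f set) set \<Rightarrow> 'f gstate set" where
  "S_F R = {RuleS x A | x A. (x, A) \<in> R}"

definition is_path :: "('f \<times> 'f set) set \<Rightarrow> 'f gstate list \<Rightarrow> bool" where
  "is_path R p \<longleftrightarrow> p \<noteq> [] \<and> (\<forall>i. Suc i < length p \<longrightarrow> (p ! i, p ! Suc i) \<in> game_edges R)"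

definition general_strategy_F ::
  "('f \<times> 'f set) set \<Rightarrow> ('f gstate list \<Rightarrow> 'f gstate \<times> 'f gstate) \<Rightarrow> bool" where
  "general_strategy_F R \<rho> \<longleftrightarrow>
     (\<forall>p. is_path R p \<and> last p \<in> S_F R \<and> (\<exists>s. (last p, s) \<in> game_edges R) \<longrightarrow>
          \<rho> p \<in> game_edges R \<and> fst (\<rho> p) = last p)"

definition positional_strategy_F ::
  "('f \<times> 'f set) set \<Rightarrow> ('f gstate \<Rightarrow> 'f gstate \<times> 'f gstate) \<Rightarrow> bool" where
  "positional_strategy_F R \<tau> \<longleftrightarrow>
     (\<forall>s. s \<in> S_F R \<and> (\<exists>s'. (s, s') \<in> game_edges R) \<longrightarrow>
          \<tau> s \<in> game_edges R \<and> fst (\<tau> s) = s)"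

definition consistent ::
  "('f \<times> 'f set) set \<Rightarrow> ('f gstate list \<Rightarrow> 'f gstate \<times> 'f gstate) \<Rightarrow> 'f gstate list \<Rightarrow> bool" where
  "consistent R \<rho> p \<longleftrightarrow> is_path R p \<and>
     (\<forall>i. Suc i < length p \<longrightarrow> p ! i \<in> S_F R \<longrightarrow> \<rho> (take (Suc i) p) = (p ! i, p ! Suc i))"

definition pos_as_general :: "('f gstate \<Rightarrow> 'f gstate \<times> 'f gstate) \<Rightarrow> 'f gstate list \<Rightarrow> 'f gstate \<times> 'f gstate" where
  "pos_as_general \<tau> = (\<lambda>p. \<tau> (last p))"

definition play_tree_nodes :: "('f \<times> 'f set) set \<Rightarrow> ('f gstate list \<Rightarrow> 'f gstate \<times> 'f gstate) \<Rightarrow> 'f \<Rightarrow> 'f gstate list set" where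
  "play_tree_nodes R \<rho> x = {p. consistent R \<rho> p \<and> hd p = FactS x}"

definition play_tree_edges :: "('f \<times> 'f set) set \<Rightarrow> ('f gstate list \<Rightarrow> 'f gstate \<times> 'f gstate) \<Rightarrow> 'f \<Rightarrow> ('f gstate list \<times> 'f gstate list) set" where
  "play_tree_edges R \<rho> x = {(p, p @ [s]) | p s. p \<in> play_tree_nodes R \<rho> x \<and> p @ [s] \<in> play_tree_nodes R \<rho> x}"

definition play_graph_nodes :: "('f \<times> 'f set) set \<Rightarrow> ('f gstate \<Rightarrow> 'f gstate \<times> 'f gstate) \<Rightarrow> 'f \<Rightarrow> 'f gstate set" where
  "play_graph_nodes R \<tau> x = {s. \<exists>p. consistent R (pos_as_general \<tau>) p \<and> hd p = FactS x \<and> s \<in> set p}"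

definition play_graph_edges :: "('f \<times> 'f set) set \<Rightarrow> ('f gstate \<Rightarrow> 'f gstate \<times> 'f gstate) \<Rightarrow> 'f \<Rightarrow> ('f gstate \<times> 'f gstate) set" where
  "play_graph_edges R \<tau> x = {(s, s') | s s'. \<exists>p i. consistent R (pos_as_general \<tau>) p \<and> hd p = FactS x \<and>
      Suc i < length p \<and> p ! i = s \<and> p ! Suc i = s'}"

definition filt_nodes :: "'n set \<Rightarrow> ('n \<Rightarrow> 'f gstate) \<Rightarrow> 'n set" where
  "filt_nodes N lab = {n \<in> N. is_fact (lab n)}"

definition filt_edges :: "'n set \<Rightarrow> ('n \<times> 'n) set \<Rightarrow> ('n \<Rightarrow> 'f gstate) \<Rightarrow> ('n \<times> 'n) set" where
  "filt_edges N E lab = {(n, m) | n m. n \<in> filt_nodes N lab \<and> m \<in> filt_nodes N lab \<and>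
      (\<exists>k \<in> N. \<not> is_fact (lab k) \<and> (n, k) \<in> E \<and> (k, m) \<in> E)}"

definition J_label :: "('f \<Rightarrow> 'f) \<Rightarrow> ('n \<Rightarrow> 'f gstate) \<Rightarrow> 'n \<Rightarrow> 'f" where
  "J_label neg lab = (\<lambda>n. neg (fact_of (lab n)))"

definition J_pos_nodes where "J_pos_nodes R \<tau> x = filt_nodes (play_graph_nodes R \<tau> x) id"
definition J_pos_edges where "J_pos_edges R \<tau> x = filt_edges (play_graph_nodes R \<tau> x) (play_graph_edges R \<tau> x) id"
definition J_pos_label :: "('f \<Rightarrow> 'f) \<Rightarrow> 'f gstate \<Rightarrow> 'f" where "J_pos_label neg = J_label neg id"

definition J_gen_nodes where "J_gen_nodes R \<rho> x = filt_nodes (play_tree_nodes R \<rho> x) last"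
definition J_gen_edges where "J_gen_edges R \<rho> x = filt_edges (play_tree_nodes R \<rho> x) (play_tree_edges R \<rho> x) last"
definition J_gen_label :: "('f \<Rightarrow> 'f) \<Rightarrow> 'f gstate list \<Rightarrow> 'f" where "J_gen_label neg = J_label neg last"

end

theory Submission
  imports Defs
begin

text \<open>Along a play consistent with a strategy of F, the opponent T chooses at each fact y a rule
  y \<leftarrow> A and F answers with some y' \<in> A. The answers of F to all the rules of y therefore
  form a selection function s for y, and by complementarity \<sim>y \<leftarrow> \<sim>Im(s) is a rule of R.
  This makes the filtered and relabelled play graph (tree) a justification; it is locally complete
  because T can move at every defined fact, and rooted at \<sim>x because everything in it lies on a
  play from x. Its labels are negated facts, so the play graph is graph-like as \<sim> is injective,
  and the play tree is tree-like because every node other than the root has exactly one parent,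
  which is shorter.\<close>

lemma game_edges_iff:
  "(u, v) \<in> game_edges R \<longleftrightarrow>
    (\<exists>a A. u = FactS a \<and> v = RuleS a A \<and> (a, A) \<in> R) \<or>
    (\<exists>a A y. u = RuleS a A \<and> v = FactS y \<and> (a, A) \<in> R \<and> y \<in> A)"
  unfolding game_edges_def by auto

lemma FactS_notin_S_F [simp]: "FactS a \<notin> S_F R"
  unfolding S_F_def by auto

lemma RuleS_in_S_F_iff [simp]: "RuleS a A \<in> S_F R \<longleftrightarrow> (a, A) \<in> R"
  unfolding S_F_def by auto

lemma game_edge_alternates: "(u, v) \<in> game_edges R \<Longrightarrow> is_fact v \<longleftrightarrow> \<not> is_fact u"
  unfolding game_edges_iff by auto

lemma is_path_nth_is_fact_iff_even:
  assumes "is_path R p" "hd p = FactS x" "i < length p"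
  shows "is_fact (p ! i) \<longleftrightarrow> even i"
  using assms(3)
proof (induction i)
  case 0
  then show ?case using assms(1,2) unfolding is_path_def by (cases p) auto
next
  case (Suc i)
  then have "(p ! i, p ! Suc i) \<in> game_edges R" using assms(1) unfolding is_path_def by auto
  then show ?case using Suc by (auto dest: game_edge_alternates)
qed

section \<open>Plays consistent with a strategy\<close>

lemma consistent_nonempty: "consistent R \<rho> p \<Longrightarrow> p \<noteq> []"
  unfolding consistent_def is_path_def by auto

lemma consistent_singleton: "consistent R \<rho> [s]"
  unfolding consistent_def is_path_def by simp

lemma consistent_take: "consistent R \<rho> p \<Longrightarrow> 0 < k \<Longrightarrow> consistent R \<rho> (take k p)"
  unfolding consistent_def is_path_def by (auto simp: min_def)

lemma consistent_snoc_iff: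
  assumes "p \<noteq> []"
  shows "consistent R \<rho> (p @ [s]) \<longleftrightarrow>
    consistent R \<rho> p \<and> (last p, s) \<in> game_edges R \<and> (last p \<in> S_F R \<longrightarrow> \<rho> p = (last p, s))"
proof -
  have idx: "Suc i < length (p @ [s]) \<longleftrightarrow> Suc i < length p \<or> i = length p - 1" for i
    using assms by (cases p) auto
  have "(p @ [s]) ! (length p - 1) = last p" "Suc (length p - 1) = length p"
    using assms by (simp_all add: nth_append last_conv_nth)
  then show ?thesis
    unfolding consistent_def is_path_def idx using assms
    by (auto simp: nth_append)
qed

lemma general_strategy_answer:
  assumes "general_strategy_F R \<rho>" "is_path R q" "last q = RuleS a A" "(a, A) \<in> R" "A \<noteq> {}"
  obtains y where "\<rho> q = (RuleS a A, FactS y)" "y \<in> A"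
proof -
  obtain y0 where "y0 \<in> A" using \<open>A \<noteq> {}\<close> by blast
  then have "(last q, FactS y0) \<in> game_edges R" using assms(3,4) by (auto simp: game_edges_iff)
  then have "\<rho> q \<in> game_edges R \<and> fst (\<rho> q) = RuleS a A"
    using assms(1-4) unfolding general_strategy_F_def by (metis RuleS_in_S_F_iff)
  then show thesis using that by (cases "\<rho> q") (auto simp: game_edges_iff)
qed

lemma positional_as_general:
  "positional_strategy_F R \<tau> \<Longrightarrow> general_strategy_F R (pos_as_general \<tau>)"
  unfolding positional_strategy_F_def general_strategy_F_def pos_as_general_def by blast

lemma positional_strategy_answer:
  assumes "positional_strategy_F R \<tau>" "(a, A) \<in> R" "A \<noteq> {}"
  obtains y where "\<tau> (RuleS a A) = (RuleS a A, FactS y)" "y \<in> A"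
  using general_strategy_answer[OF positional_as_general[OF assms(1)], of "[RuleS a A]"] assms(2,3)
  by (auto simp: is_path_def pos_as_general_def)

lemma consistent_extend_by_rule:
  assumes "general_strategy_F R \<rho>" "consistent R \<rho> p" "last p = FactS a" "(a, A) \<in> R" "A \<noteq> {}"
  obtains y where "\<rho> (p @ [RuleS a A]) = (RuleS a A, FactS y)" "y \<in> A"
    "consistent R \<rho> (p @ [RuleS a A, FactS y])"
proof -
  have p: "p \<noteq> []" using assms(2) by (rule consistent_nonempty)
  have q: "consistent R \<rho> (p @ [RuleS a A])"
    using assms(2-4) by (simp add: consistent_snoc_iff[OF p] game_edges_iff)
  then obtain y where y: "\<rho> (p @ [RuleS a A]) = (RuleS a A, FactS y)" "y \<in> A"
    using general_strategy_answer[OF assms(1) _ _ assms(4,5), of "p @ [RuleS a A]"]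
    by (auto simp: consistent_def)
  then have "consistent R \<rho> ((p @ [RuleS a A]) @ [FactS y])"
    using q assms(4) by (subst consistent_snoc_iff) (auto simp: game_edges_iff)
  then show thesis using that y by simp
qed

section \<open>Justifications from a choice of successors\<close>

lemma neg_in_defined_iff:
  assumes "justification_frame neg tt ff uu Fd R"
  shows "neg a \<in> Fd \<longleftrightarrow> a \<in> Fd"
proof -
  have "\<forall>y. neg (neg y) = y" "neg ` Fd = Fd"
    using assms by (auto simp: justification_frame_def fact_space_ok_def)
  then show ?thesis by (metis imageI)
qed

text \<open>Here f n is the fact at node n, and g n A is the node reached when T plays the rule
  f n \<leftarrow> A and F answers; the answers f (g n A) form a selection function for f n.\<close>

lemma justification_of_successor_choice:
  assumes frame: "justification_frame neg tt ff uu Fd R" and comp: "complementary neg Fd R"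
    and edges: "E \<subseteq> N \<times> N"
    and succ: "\<And>n m. n \<in> N \<Longrightarrow> (n, m) \<in> E \<longleftrightarrow> (\<exists>A. (f n, A) \<in> R \<and> m = g n A)"
    and choice: "\<And>n A. n \<in> N \<Longrightarrow> (f n, A) \<in> R \<Longrightarrow> f (g n A) \<in> A"
  shows "is_justification Fd R N E (\<lambda>n. neg (f n))"
  unfolding is_justification_def
proof (intro conjI ballI impI edges)
  fix n assume n: "n \<in> N" and "\<exists>m. (n, m) \<in> E"
  then obtain A where "(f n, A) \<in> R" using succ by blast
  then have defined: "f n \<in> Fd" using frame by (auto simp: justification_frame_def)
  then show "neg (f n) \<in> Fd" using neg_in_defined_iff[OF frame] by simp
  have "selection_fun R (f n) (\<lambda>A. f (g n A))"
    using choice[OF n] by (simp add: selection_fun_def)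
  then have "(neg (f n), neg ` sel_image R (f n) (\<lambda>A. f (g n A))) \<in> R"
    using comp defined unfolding complementary_def Rstar_def by blast
  moreover have "{neg (f m) | m. (n, m) \<in> E} = neg ` sel_image R (f n) (\<lambda>A. f (g n A))"
    using succ[OF n] by (auto simp: sel_image_def)
  ultimately show "(neg (f n), {neg (f m) | m. (n, m) \<in> E}) \<in> R" by simp
qed

lemma locally_complete_of_successor_choice:
  assumes frame: "justification_frame neg tt ff uu Fd R"
    and succ: "\<And>n m. n \<in> N \<Longrightarrow> (n, m) \<in> E \<longleftrightarrow> (\<exists>A. (f n, A) \<in> R \<and> m = g n A)"
  shows "locally_complete Fd N E (\<lambda>n. neg (f n))"
  unfolding locally_complete_def
proof (intro ballI impI notI)
  fix n assume n: "n \<in> N" and leaf: "\<nexists>m. (n, m) \<in> E" and "neg (f n) \<in> Fd"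
  then have "f n \<in> Fd" using neg_in_defined_iff[OF frame] by simp
  then obtain A where "(f n, A) \<in> R" using frame by (auto simp: justification_frame_def)
  then show False using leaf succ[OF n] by blast
qed

lemma connected_just_if_root_reaches:
  assumes "r \<in> N" "\<And>n. n \<in> N \<Longrightarrow> (r, n) \<in> E\<^sup>*"
  shows "connected_just N E"
  unfolding connected_just_def
proof (intro ballI)
  fix n m assume "n \<in> N" "m \<in> N"
  then have "(r, n) \<in> (E \<union> E\<inverse>)\<^sup>*" "(r, m) \<in> (E \<union> E\<inverse>)\<^sup>*"
    using assms rtrancl_mono[of E "E \<union> E\<inverse>"] by blast+
  moreover have "((E \<union> E\<inverse>)\<^sup>*)\<inverse> = (E \<union> E\<inverse>)\<^sup>*"
    by (metis converse_Un converse_converse rtrancl_converse sup_commute)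
  ultimately show "(n, m) \<in> (E \<union> E\<inverse>)\<^sup>*" by (metis converseI rtrancl_trans)
qed

section \<open>The justification of a general strategy\<close>

lemma J_gen_nodes_iff:
  "n \<in> J_gen_nodes R \<rho> x \<longleftrightarrow> consistent R \<rho> n \<and> hd n = FactS x \<and> is_fact (last n)"
  by (simp add: J_gen_nodes_def filt_nodes_def play_tree_nodes_def)

lemma J_gen_root_node: "[FactS x] \<in> J_gen_nodes R \<rho> x"
  by (simp add: J_gen_nodes_iff consistent_singleton)

lemma J_gen_edges_iff:
  "(p, q) \<in> J_gen_edges R \<rho> x \<longleftrightarrow>
     p \<in> J_gen_nodes R \<rho> x \<and> q \<in> J_gen_nodes R \<rho> x \<and> (\<exists>r s. q = p @ [r, s] \<and> \<not> is_fact r)"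
proof
  assume "(p, q) \<in> J_gen_edges R \<rho> x"
  then show "p \<in> J_gen_nodes R \<rho> x \<and> q \<in> J_gen_nodes R \<rho> x \<and> (\<exists>r s. q = p @ [r, s] \<and> \<not> is_fact r)"
    unfolding J_gen_edges_def J_gen_nodes_def filt_edges_def filt_nodes_def play_tree_edges_def
    by auto
next
  assume "p \<in> J_gen_nodes R \<rho> x \<and> q \<in> J_gen_nodes R \<rho> x \<and> (\<exists>r s. q = p @ [r, s] \<and> \<not> is_fact r)"
  then obtain r s where p: "p \<in> J_gen_nodes R \<rho> x" and q: "q \<in> J_gen_nodes R \<rho> x"
    and qrs: "q = p @ [r, s]" and r: "\<not> is_fact r" by blast
  have "p \<noteq> []" using p consistent_nonempty by (auto simp: J_gen_nodes_iff)
  moreover have "consistent R \<rho> (take (Suc (length p)) q)"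
    using q by (intro consistent_take) (auto simp: J_gen_nodes_iff)
  ultimately have "p @ [r] \<in> play_tree_nodes R \<rho> x"
    using p qrs by (simp add: play_tree_nodes_def J_gen_nodes_iff)
  then show "(p, q) \<in> J_gen_edges R \<rho> x"
    using p q qrs r
    unfolding J_gen_edges_def J_gen_nodes_def filt_edges_def filt_nodes_def play_tree_edges_def
    by (auto intro!: bexI[of _ "p @ [r]"])
qed

lemma J_gen_successors:
  assumes strategy: "general_strategy_F R \<rho>" and bodies: "\<forall>(a, A) \<in> R. A \<noteq> {}"
    and n: "n \<in> J_gen_nodes R \<rho> x" and last: "last n = FactS a"
  shows "(n, m) \<in> J_gen_edges R \<rho> x \<longleftrightarrow>
    (\<exists>A. (a, A) \<in> R \<and> m = n @ [RuleS a A, snd (\<rho> (n @ [RuleS a A]))])"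
proof
  assume "(n, m) \<in> J_gen_edges R \<rho> x"
  then obtain r s where m: "m \<in> J_gen_nodes R \<rho> x" and mrs: "m = n @ [r, s]"
    by (auto simp: J_gen_edges_iff)
  have "n \<noteq> []" using n consistent_nonempty by (auto simp: J_gen_nodes_iff)
  then have "consistent R \<rho> (n @ [r]) \<and> (r, s) \<in> game_edges R \<and> (r \<in> S_F R \<longrightarrow> \<rho> (n @ [r]) = (r, s))"
    and "(FactS a, r) \<in> game_edges R"
    using m mrs last consistent_snoc_iff[of "n @ [r]"] consistent_snoc_iff[of n]
    by (auto simp: J_gen_nodes_iff)
  then show "\<exists>A. (a, A) \<in> R \<and> m = n @ [RuleS a A, snd (\<rho> (n @ [RuleS a A]))]"
    using mrs by (auto simp: game_edges_iff)
next
  assume "\<exists>A. (a, A) \<in> R \<and> m = n @ [RuleS a A, snd (\<rho> (n @ [RuleS a A]))]"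
  then obtain A where rule: "(a, A) \<in> R" and m: "m = n @ [RuleS a A, snd (\<rho> (n @ [RuleS a A]))]"
    by blast
  have "A \<noteq> {}" using bodies rule by auto
  then obtain y where "\<rho> (n @ [RuleS a A]) = (RuleS a A, FactS y)"
    "consistent R \<rho> (n @ [RuleS a A, FactS y])"
    using consistent_extend_by_rule[OF strategy _ last rule] n by (auto simp: J_gen_nodes_iff)
  then show "(n, m) \<in> J_gen_edges R \<rho> x"
    using n m consistent_nonempty by (fastforce simp: J_gen_edges_iff J_gen_nodes_iff)
qed

lemma J_gen_parent:
  assumes n: "n \<in> J_gen_nodes R \<rho> x" and "n \<noteq> [FactS x]"
  obtains p where "(p, n) \<in> J_gen_edges R \<rho> x"
proof -
  have c: "consistent R \<rho> n" and hd: "hd n = FactS x" and last: "is_fact (last n)"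
    using n by (simp_all add: J_gen_nodes_iff)
  have fact_iff: "i < length n \<Longrightarrow> is_fact (n ! i) \<longleftrightarrow> even i" for i
    using is_path_nth_is_fact_iff_even[of R n x i] c hd by (simp add: consistent_def)
  have "n \<noteq> []" using c by (rule consistent_nonempty)
  then have "odd (length n)"
    using fact_iff[of "length n - 1"] last by (simp add: last_conv_nth)
  moreover have "length n \<noteq> 1" using hd \<open>n \<noteq> [FactS x]\<close> by (cases n) auto
  ultimately have "length n \<ge> 3" by presburger
  then obtain p r s where nprs: "n = p @ [r, s]" and "p \<noteq> []"
  proof (cases n rule: rev_exhaust)
    case (snoc q s)
    then show thesis using that \<open>length n \<ge> 3\<close> by (cases q rule: rev_exhaust) fastforce+
  qed (use \<open>length n \<ge> 3\<close> in simp)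
  have "odd (length p)" using \<open>odd (length n)\<close> nprs by simp
  have "\<not> is_fact r" using fact_iff[of "length p"] nprs \<open>odd (length p)\<close> by simp
  moreover have "p \<in> J_gen_nodes R \<rho> x"
  proof -
    have "consistent R \<rho> (take (length p) n)" using c \<open>p \<noteq> []\<close> by (simp add: consistent_take)
    moreover have "is_fact (last p)"
      using fact_iff[of "length p - 1"] nprs \<open>p \<noteq> []\<close> \<open>odd (length p)\<close>
      by (simp add: last_conv_nth nth_append)
    ultimately show ?thesis using hd nprs \<open>p \<noteq> []\<close> by (simp add: J_gen_nodes_iff)
  qed
  ultimately show thesis using that n nprs by (auto simp: J_gen_edges_iff)
qed

lemma J_gen_reachable_from_root:
  assumes "n \<in> J_gen_nodes R \<rho> x"
  shows "([FactS x], n) \<in> (J_gen_edges R \<rho> x)\<^sup>*"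
  using assms
proof (induction n rule: length_induct)
  case (1 n)
  show ?case
  proof (cases "n = [FactS x]")
    case False
    then obtain p where edge: "(p, n) \<in> J_gen_edges R \<rho> x" using J_gen_parent[OF "1.prems"] by blast
    then have "p \<in> J_gen_nodes R \<rho> x" "length p < length n" by (auto simp: J_gen_edges_iff)
    then show ?thesis using "1.IH" edge by (meson rtrancl.rtrancl_into_rtrancl)
  qed simp
qed

lemma mod_Suc_ne_mod_pred:
  "3 \<le> (n::nat) \<Longrightarrow> i < n \<Longrightarrow> (i + 1) mod n \<noteq> (i + n - 1) mod n"
  by (cases "i = 0"; cases "Suc i = n") (auto simp: mod_if)

lemma mod_pred_Suc: "i < (n::nat) \<Longrightarrow> ((i + n - 1) mod n + 1) mod n = i"
  by (cases "i = 0") (auto simp: mod_if)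

lemma J_gen_adjacent_shorter:
  assumes "uadj (J_gen_edges R \<rho> x) c d" "length d \<le> length c"
  shows "d = take (length c - 2) c"
  using assms unfolding uadj_def by (auto simp: J_gen_edges_iff)

text \<open>A longest node on an undirected cycle would have its parent as both neighbours.\<close>

lemma J_gen_tree_like: "tree_like (J_gen_nodes R \<rho> x) (J_gen_edges R \<rho> x)"
  unfolding tree_like_def
proof (intro conjI allI notI)
  fix n assume "(n, n) \<in> J_gen_edges R \<rho> x"
  then show False by (auto simp: J_gen_edges_iff)
next
  let ?E = "J_gen_edges R \<rho> x"
  assume "\<exists>cs. 3 \<le> length cs \<and> distinct cs \<and> set cs \<subseteq> J_gen_nodes R \<rho> x \<and>
    (\<forall>i<length cs. uadj ?E (cs ! i) (cs ! ((i + 1) mod length cs)))"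
  then obtain cs where len: "3 \<le> length cs" and "distinct cs"
    and adj: "\<And>i. i < length cs \<Longrightarrow> uadj ?E (cs ! i) (cs ! ((i + 1) mod length cs))"
    by blast
  let ?n = "length cs"
  obtain c where "c \<in> set cs" and c_longest: "length c = Max (length ` set cs)"
    using len Max_in[of "length ` set cs"] by fastforce
  then obtain i where i: "i < ?n" "cs ! i = c" by (auto simp: in_set_conv_nth)
  have longest: "length (cs ! j) \<le> length (cs ! i)" if "j < ?n" for j
    using that i c_longest by simp
  define next_i prev_i where "next_i = (i + 1) mod ?n" and "prev_i = (i + ?n - 1) mod ?n"
  have "0 < ?n" using len by linarith
  then have "next_i < ?n" "prev_i < ?n" unfolding next_i_def prev_i_def by simp_all
  have "(prev_i + 1) mod ?n = i" unfolding prev_i_def using i(1) by (rule mod_pred_Suc)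
  then have "uadj ?E (cs ! i) (cs ! prev_i)"
    using adj[OF \<open>prev_i < ?n\<close>] by (simp add: uadj_def disj_commute)
  moreover have "uadj ?E (cs ! i) (cs ! next_i)" using adj[OF i(1)] unfolding next_i_def .
  ultimately have "cs ! next_i = cs ! prev_i"
    using J_gen_adjacent_shorter longest \<open>next_i < ?n\<close> \<open>prev_i < ?n\<close> by metis
  then have "next_i = prev_i"
    using \<open>distinct cs\<close> \<open>next_i < ?n\<close> \<open>prev_i < ?n\<close> by (simp add: nth_eq_iff_index_eq)
  then show False using mod_Suc_ne_mod_pred[OF len i(1)] unfolding next_i_def prev_i_def by simp
qed

theorem J_gen_justification:
  assumes frame: "justification_frame neg tt ff uu Fd R" and comp: "complementary neg Fd R"
    and strategy: "general_strategy_F R \<rho>"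
  shows "is_justification Fd R (J_gen_nodes R \<rho> x) (J_gen_edges R \<rho> x) (J_gen_label neg) \<and>
    connected_just (J_gen_nodes R \<rho> x) (J_gen_edges R \<rho> x) \<and>
    locally_complete Fd (J_gen_nodes R \<rho> x) (J_gen_edges R \<rho> x) (J_gen_label neg) \<and>
    tree_like (J_gen_nodes R \<rho> x) (J_gen_edges R \<rho> x) \<and>
    is_root (J_gen_nodes R \<rho> x) (J_gen_edges R \<rho> x) (J_gen_label neg) (neg x)"
proof -
  let ?N = "J_gen_nodes R \<rho> x" and ?E = "J_gen_edges R \<rho> x"
  let ?fact = "\<lambda>n. fact_of (last n)"
  let ?child = "\<lambda>n A. n @ [RuleS (?fact n) A, snd (\<rho> (n @ [RuleS (?fact n) A]))]"
  have bodies: "\<forall>(a, A) \<in> R. A \<noteq> {}" using frame by (auto simp: justification_frame_def)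
  have last_fact: "last n = FactS (?fact n)" if "n \<in> ?N" for n
    using that by (cases "last n") (auto simp: J_gen_nodes_iff)
  have succ: "(n, m) \<in> ?E \<longleftrightarrow> (\<exists>A. (?fact n, A) \<in> R \<and> m = ?child n A)" if "n \<in> ?N" for n m
    using J_gen_successors[OF strategy bodies that last_fact[OF that]] .
  have choice: "?fact (?child n A) \<in> A" if n: "n \<in> ?N" and rule: "(?fact n, A) \<in> R" for n A
  proof -
    have "consistent R \<rho> n" using n by (simp add: J_gen_nodes_iff)
    moreover have "A \<noteq> {}" using bodies rule by auto
    ultimately obtain y where "\<rho> (n @ [RuleS (?fact n) A]) = (RuleS (?fact n) A, FactS y)" "y \<in> A"
      using consistent_extend_by_rule[OF strategy _ last_fact[OF n] rule] by blast
    then show ?thesis by simp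
  qed
  have "?E \<subseteq> ?N \<times> ?N" by (auto simp: J_gen_edges_iff)
  then have "is_justification Fd R ?N ?E (J_gen_label neg)"
    using justification_of_successor_choice[OF frame comp _ succ choice]
    by (simp add: J_gen_label_def J_label_def)
  moreover have "locally_complete Fd ?N ?E (J_gen_label neg)"
    using locally_complete_of_successor_choice[OF frame succ]
    by (simp add: J_gen_label_def J_label_def)
  moreover have "is_root ?N ?E (J_gen_label neg) (neg x)"
    unfolding is_root_def
    by (intro bexI[OF _ J_gen_root_node]) (simp add: J_gen_label_def J_label_def J_gen_reachable_from_root)
  moreover have "connected_just ?N ?E"
    by (rule connected_just_if_root_reaches[OF J_gen_root_node]) (rule J_gen_reachable_from_root)
  ultimately show ?thesis using J_gen_tree_like[of R \<rho> x] by blast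
qed

section \<open>The justification of a positional strategy\<close>

lemma J_pos_nodes_eq_last_J_gen_nodes:
  "J_pos_nodes R \<tau> x = last ` J_gen_nodes R (pos_as_general \<tau>) x"
proof
  show "J_pos_nodes R \<tau> x \<subseteq> last ` J_gen_nodes R (pos_as_general \<tau>) x"
  proof
    fix s assume "s \<in> J_pos_nodes R \<tau> x"
    then obtain p i where p: "consistent R (pos_as_general \<tau>) p" "hd p = FactS x" "is_fact s"
      and i: "i < length p" "p ! i = s"
      unfolding J_pos_nodes_def filt_nodes_def play_graph_nodes_def by (auto simp: in_set_conv_nth)
    moreover have "last (take (Suc i) p) = s" using i by (simp add: take_Suc_conv_app_nth)
    ultimately have "take (Suc i) p \<in> J_gen_nodes R (pos_as_general \<tau>) x"
      by (simp add: J_gen_nodes_iff consistent_take)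
    then show "s \<in> last ` J_gen_nodes R (pos_as_general \<tau>) x"
      using \<open>last (take (Suc i) p) = s\<close> by force
  qed
next
  show "last ` J_gen_nodes R (pos_as_general \<tau>) x \<subseteq> J_pos_nodes R \<tau> x"
    unfolding J_pos_nodes_def filt_nodes_def play_graph_nodes_def
    by (force simp: J_gen_nodes_iff dest: consistent_nonempty)
qed

lemma J_pos_nodes_are_facts: "s \<in> J_pos_nodes R \<tau> x \<Longrightarrow> \<exists>a. s = FactS a"
  unfolding J_pos_nodes_def filt_nodes_def by (cases s) auto

lemma play_graph_edgeI:
  "consistent R (pos_as_general \<tau>) q \<Longrightarrow> hd q = FactS x \<Longrightarrow> Suc i < length q \<Longrightarrow>
    (q ! i, q ! Suc i) \<in> play_graph_edges R \<tau> x"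
  unfolding play_graph_edges_def by blast

lemma play_graph_edge_game_edge:
  "(s, t) \<in> play_graph_edges R \<tau> x \<Longrightarrow> (s, t) \<in> game_edges R"
  unfolding play_graph_edges_def consistent_def is_path_def by auto

lemma play_graph_edge_follows_strategy:
  assumes "(s, t) \<in> play_graph_edges R \<tau> x" "s \<in> S_F R"
  shows "\<tau> s = (s, t)"
proof -
  obtain p i where p: "consistent R (pos_as_general \<tau>) p" "Suc i < length p" "p ! i = s" "p ! Suc i = t"
    using assms(1) unfolding play_graph_edges_def by auto
  then have "pos_as_general \<tau> (take (Suc i) p) = (s, t)"
    using assms(2) unfolding consistent_def by auto
  then show ?thesis using p by (simp add: pos_as_general_def take_Suc_conv_app_nth)
qed

lemma J_pos_edge_of_J_gen_edge:
  assumes "(p, q) \<in> J_gen_edges R (pos_as_general \<tau>) x"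
  shows "(last p, last q) \<in> J_pos_edges R \<tau> x"
proof -
  obtain r s where p: "p \<in> J_gen_nodes R (pos_as_general \<tau>) x"
    and q: "q \<in> J_gen_nodes R (pos_as_general \<tau>) x" and qrs: "q = p @ [r, s]" and r: "\<not> is_fact r"
    using assms by (auto simp: J_gen_edges_iff)
  have cq: "consistent R (pos_as_general \<tau>) q" and hq: "hd q = FactS x"
    using q by (simp_all add: J_gen_nodes_iff)
  have "p \<noteq> []" using p consistent_nonempty by (auto simp: J_gen_nodes_iff)
  have "(q ! (length p - 1), q ! Suc (length p - 1)) \<in> play_graph_edges R \<tau> x"
    by (rule play_graph_edgeI[OF cq hq]) (simp add: qrs)
  moreover have "(q ! length p, q ! Suc (length p)) \<in> play_graph_edges R \<tau> x"
    by (rule play_graph_edgeI[OF cq hq]) (simp add: qrs)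
  ultimately have "(last p, r) \<in> play_graph_edges R \<tau> x" "(r, s) \<in> play_graph_edges R \<tau> x"
    using qrs \<open>p \<noteq> []\<close> by (simp_all add: nth_append last_conv_nth)
  moreover have "{last p, r, s} \<subseteq> play_graph_nodes R \<tau> x"
    using q qrs \<open>p \<noteq> []\<close> unfolding play_graph_nodes_def J_gen_nodes_iff by auto
  moreover have "is_fact (last p)" "is_fact s" using p q qrs by (auto simp: J_gen_nodes_iff)
  ultimately show ?thesis
    using r qrs unfolding J_pos_edges_def filt_edges_def filt_nodes_def by auto
qed

lemma J_pos_successors:
  assumes strategy: "positional_strategy_F R \<tau>" and bodies: "\<forall>(a, A) \<in> R. A \<noteq> {}"
    and a: "FactS a \<in> J_pos_nodes R \<tau> x"
  shows "(FactS a, m) \<in> J_pos_edges R \<tau> x \<longleftrightarrow> (\<exists>A. (a, A) \<in> R \<and> m = snd (\<tau> (RuleS a A)))"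
proof
  assume "(FactS a, m) \<in> J_pos_edges R \<tau> x"
  then obtain k where ak: "(FactS a, k) \<in> play_graph_edges R \<tau> x"
    and km: "(k, m) \<in> play_graph_edges R \<tau> x"
    unfolding J_pos_edges_def filt_edges_def by auto
  obtain A where "k = RuleS a A" "(a, A) \<in> R"
    using play_graph_edge_game_edge[OF ak] by (auto simp: game_edges_iff)
  then show "\<exists>A. (a, A) \<in> R \<and> m = snd (\<tau> (RuleS a A))"
    using play_graph_edge_follows_strategy[OF km] by auto
next
  assume "\<exists>A. (a, A) \<in> R \<and> m = snd (\<tau> (RuleS a A))"
  then obtain A where rule: "(a, A) \<in> R" and m: "m = snd (\<tau> (RuleS a A))" by blast
  obtain p where p: "p \<in> J_gen_nodes R (pos_as_general \<tau>) x" and last: "last p = FactS a"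
    using a by (auto simp: J_pos_nodes_eq_last_J_gen_nodes)
  let ?q = "p @ [RuleS a A, snd (pos_as_general \<tau> (p @ [RuleS a A]))]"
  have "(p, ?q) \<in> J_gen_edges R (pos_as_general \<tau>) x"
    using J_gen_successors[OF positional_as_general[OF strategy] bodies p last] rule by blast
  then have "(last p, last ?q) \<in> J_pos_edges R \<tau> x" by (rule J_pos_edge_of_J_gen_edge)
  then show "(FactS a, m) \<in> J_pos_edges R \<tau> x" using last m by (simp add: pos_as_general_def)
qed

lemma J_pos_reachable_from_root:
  assumes "s \<in> J_pos_nodes R \<tau> x"
  shows "(FactS x, s) \<in> (J_pos_edges R \<tau> x)\<^sup>*"
proof -
  obtain p where p: "p \<in> J_gen_nodes R (pos_as_general \<tau>) x" and s: "s = last p"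
    using assms by (auto simp: J_pos_nodes_eq_last_J_gen_nodes)
  have "([FactS x], p) \<in> (J_gen_edges R (pos_as_general \<tau>) x)\<^sup>*"
    using J_gen_reachable_from_root[OF p] .
  then have "(last [FactS x], last p) \<in> (J_pos_edges R \<tau> x)\<^sup>*"
    by (induction rule: rtrancl_induct) (auto intro: rtrancl_into_rtrancl J_pos_edge_of_J_gen_edge)
  then show ?thesis using s by simp
qed

theorem J_pos_justification:
  assumes frame: "justification_frame neg tt ff uu Fd R" and comp: "complementary neg Fd R"
    and strategy: "positional_strategy_F R \<tau>"
  shows "is_justification Fd R (J_pos_nodes R \<tau> x) (J_pos_edges R \<tau> x) (J_pos_label neg) \<and>
    connected_just (J_pos_nodes R \<tau> x) (J_pos_edges R \<tau> x) \<and>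
    locally_complete Fd (J_pos_nodes R \<tau> x) (J_pos_edges R \<tau> x) (J_pos_label neg) \<and>
    graph_like (J_pos_nodes R \<tau> x) (J_pos_label neg) \<and>
    is_root (J_pos_nodes R \<tau> x) (J_pos_edges R \<tau> x) (J_pos_label neg) (neg x)"
proof -
  let ?N = "J_pos_nodes R \<tau> x" and ?E = "J_pos_edges R \<tau> x"
  let ?child = "\<lambda>s A. snd (\<tau> (RuleS (fact_of s) A))"
  have bodies: "\<forall>(a, A) \<in> R. A \<noteq> {}" using frame by (auto simp: justification_frame_def)
  have succ: "(s, t) \<in> ?E \<longleftrightarrow> (\<exists>A. (fact_of s, A) \<in> R \<and> t = ?child s A)"
    if s: "s \<in> ?N" for s t
  proof -
    obtain a where a: "s = FactS a" using J_pos_nodes_are_facts[OF s] by blast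
    show ?thesis unfolding a fact_of.simps using J_pos_successors[OF strategy bodies s[unfolded a]] .
  qed
  have choice: "fact_of (?child s A) \<in> A" if rule: "(fact_of s, A) \<in> R" for s A
  proof -
    have "A \<noteq> {}" using bodies rule by auto
    then obtain y where "\<tau> (RuleS (fact_of s) A) = (RuleS (fact_of s) A, FactS y)" "y \<in> A"
      using positional_strategy_answer[OF strategy rule] by blast
    then show ?thesis by simp
  qed
  have root: "FactS x \<in> ?N"
    using J_gen_root_node by (force simp: J_pos_nodes_eq_last_J_gen_nodes)
  have "?E \<subseteq> ?N \<times> ?N" unfolding J_pos_edges_def J_pos_nodes_def filt_edges_def by auto
  then have "is_justification Fd R ?N ?E (J_pos_label neg)"
    using justification_of_successor_choice[OF frame comp _ succ choice]
    by (simp add: J_pos_label_def J_label_def)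
  moreover have "locally_complete Fd ?N ?E (J_pos_label neg)"
    using locally_complete_of_successor_choice[OF frame succ]
    by (simp add: J_pos_label_def J_label_def)
  moreover have "graph_like ?N (J_pos_label neg)"
    unfolding graph_like_def
  proof (rule inj_onI)
    fix s t assume "s \<in> ?N" "t \<in> ?N" "J_pos_label neg s = J_pos_label neg t"
    then obtain a b where "s = FactS a" "t = FactS b" "neg a = neg b"
      using J_pos_nodes_are_facts by (force simp: J_pos_label_def J_label_def)
    moreover have "\<forall>y. neg (neg y) = y"
      using frame by (simp add: justification_frame_def fact_space_ok_def)
    ultimately show "s = t" by metis
  qed
  moreover have "is_root ?N ?E (J_pos_label neg) (neg x)"
    unfolding is_root_def
    by (intro bexI[OF _ root]) (simp add: J_pos_label_def J_label_def J_pos_reachable_from_root)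
  moreover have "connected_just ?N ?E"
    by (rule connected_just_if_root_reaches[OF root]) (rule J_pos_reachable_from_root)
  ultimately show ?thesis by blast
qed

theorem mainTheorem7:
  fixes neg :: "'f \<Rightarrow> 'f" and tt ff uu :: 'f and Fd :: "'f set"
    and R :: "('f \<times> 'f set) set" and x :: 'f
  assumes "justification_frame neg tt ff uu Fd R"
    and "complementary neg Fd R"
    and "x \<in> Fd"
  shows "(\<forall>\<tau>. positional_strategy_F R \<tau> \<longrightarrow>
            is_justification Fd R (J_pos_nodes R \<tau> x) (J_pos_edges R \<tau> x) (J_pos_label neg) \<and>
            connected_just (J_pos_nodes R \<tau> x) (J_pos_edges R \<tau> x) \<and>
            locally_complete Fd (J_pos_nodes R \<tau> x) (J_pos_edges R \<tau> x) (J_pos_label neg) \<and>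
            graph_like (J_pos_nodes R \<tau> x) (J_pos_label neg) \<and>
            is_root (J_pos_nodes R \<tau> x) (J_pos_edges R \<tau> x) (J_pos_label neg) (neg x))
       \<and> (\<forall>\<rho>. general_strategy_F R \<rho> \<longrightarrow>
            is_justification Fd R (J_gen_nodes R \<rho> x) (J_gen_edges R \<rho> x) (J_gen_label neg) \<and>
            connected_just (J_gen_nodes R \<rho> x) (J_gen_edges R \<rho> x) \<and>
            locally_complete Fd (J_gen_nodes R \<rho> x) (J_gen_edges R \<rho> x) (J_gen_label neg) \<and>
            tree_like (J_gen_nodes R \<rho> x) (J_gen_edges R \<rho> x) \<and>
            is_root (J_gen_nodes R \<rho> x) (J_gen_edges R \<rho> x) (J_gen_label neg) (neg x))"
  using J_pos_justification[OF assms(1,2)] J_gen_justification[OF assms(1,2)] by blast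

end
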